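(* Let $r\ge1$ be an integer and $\lambda\in\mathbb R$. Define $u_0(\lambda)=1$, $v_0(\lambda)=\min(2,\lambda)$, and for $1\le i\le r$ set $(u_i(\lambda),v_i(\lambda))=G_i(u_{i-1}(\lambda),v_{i-1}(\lambda))$, where $$G_i(a,b)=\big(1+\min(a,b),\ 1-2^{-i}+\max(a,b)\big).$$ Further set $z_0(\lambda)=1$, $h_0(\lambda)=2$, and for $1\le i\le r$ set $z_i(\lambda)=1+u_{i-1}(\lambda)$, $z_i'(\lambda)=1+v_{i-1}(\lambda)$, $h_i(\lambda)=v_i(\lambda)$. Then the point $(u(\lambda),v(\lambda),z(\lambda),z'(\lambda),h(\lambda))$ is the tropical barycenter (coordinatewise greatest element) of the $\lambda$-sublevel set of the tropical system $\mathrm{TropLP}_r$ described in the context.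
   Context: $\mathrm{TropLP}_r$ has variables $u_i,v_i,z_i,h_i\in\mathbb R\cup\{-\infty\}$ for $0\le i\le r$ and $z'_i$ for $1\le i\le r$. Its constraints are: - $\max(u_0,z_0)=1$ and $\max(v_0,h_0)=2$; - for $1\le i\le r$: $\max(u_i,z_i)=1+u_{i-1}$, $\max(u_i,z'_i)=1+v_{i-1}$, and $\max(v_i,h_i)=1-2^{-i}+\max(u_{i-1},v_{i-1})$. Its $\lambda$-sublevel set is the set of feasible points of these constraints that additionally satisfy $v_0\le\lambda$. *)

theory Defs
  imports Complex_Main "HOL-Library.Extended_Real"
begin

text \<open>Tropical values live in R \<union> {-\<infinity>}: we use ereal and exclude +\<infinity>.
A point of TropLP_r is a tuple (u, v, z, z', h) of functions nat \<Rightarrow> ereal;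
only indices 0..r (resp. 1..r for z') are meaningful.\<close>

type_synonym trop_point =
  "(nat \<Rightarrow> ereal) \<times> (nat \<Rightarrow> ereal) \<times> (nat \<Rightarrow> ereal) \<times> (nat \<Rightarrow> ereal) \<times> (nat \<Rightarrow> ereal)"

definition TropLP_feasible :: "nat \<Rightarrow> trop_point \<Rightarrow> bool" where
  "TropLP_feasible r p = (case p of (u, v, z, z', h) \<Rightarrow>
     (\<forall>i\<le>r. u i \<noteq> \<infinity> \<and> v i \<noteq> \<infinity> \<and> z i \<noteq> \<infinity> \<and> h i \<noteq> \<infinity>) \<and>
     (\<forall>i\<in>{1..r}. z' i \<noteq> \<infinity>) \<and>
     max (u 0) (z 0) = 1 \<and> max (v 0) (h 0) = 2 \<and>
     (\<forall>i\<in>{1..r}.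
        max (u i) (z i) = 1 + u (i - 1) \<and>
        max (u i) (z' i) = 1 + v (i - 1) \<and>
        max (v i) (h i) = ereal (1 - 1 / 2 ^ i) + max (u (i - 1)) (v (i - 1))))"

definition TropLP_sublevel :: "nat \<Rightarrow> real \<Rightarrow> trop_point set" where
  "TropLP_sublevel r lam = {p. TropLP_feasible r p \<and> fst (snd p) 0 \<le> ereal lam}"

definition trop_le :: "nat \<Rightarrow> trop_point \<Rightarrow> trop_point \<Rightarrow> bool" where
  "trop_le r p q = (case p of (u, v, z, z', h) \<Rightarrow> case q of (u2, v2, z2, z2', h2) \<Rightarrow>
     (\<forall>i\<le>r. u i \<le> u2 i \<and> v i \<le> v2 i \<and> z i \<le> z2 i \<and> h i \<le> h2 i) \<and>
     (\<forall>i\<in>{1..r}. z' i \<le> z2' i))"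

definition is_trop_barycenter :: "nat \<Rightarrow> trop_point set \<Rightarrow> trop_point \<Rightarrow> bool" where
  "is_trop_barycenter r S p = (p \<in> S \<and> (\<forall>q\<in>S. trop_le r q p))"

definition G :: "nat \<Rightarrow> real \<times> real \<Rightarrow> real \<times> real" where
  "G i ab = (case ab of (a, b) \<Rightarrow> (1 + min a b, 1 - 1 / 2 ^ i + max a b))"

fun uv :: "real \<Rightarrow> nat \<Rightarrow> real \<times> real" where
  "uv lam 0 = (1, min 2 lam)"
| "uv lam (Suc i) = G (Suc i) (uv lam i)"

definition u_of :: "real \<Rightarrow> nat \<Rightarrow> real" where "u_of lam i = fst (uv lam i)"
definition v_of :: "real \<Rightarrow> nat \<Rightarrow> real" where "v_of lam i = snd (uv lam i)"

definition z_of :: "real \<Rightarrow> nat \<Rightarrow> real" where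
  "z_of lam i = (if i = 0 then 1 else 1 + u_of lam (i - 1))"
definition z'_of :: "real \<Rightarrow> nat \<Rightarrow> real" where
  "z'_of lam i = 1 + v_of lam (i - 1)"
definition h_of :: "real \<Rightarrow> nat \<Rightarrow> real" where
  "h_of lam i = (if i = 0 then 2 else v_of lam i)"

end

theory Submission
  imports Defs
begin

text \<open>Every constraint of \<open>TropLP\<^sub>r\<close> has the shape \<open>max x y = c\<close>, so it bounds both \<open>x\<close> and
\<open>y\<close> by a right-hand side that is monotone in the variables of the previous layer. Starting
from \<open>u\<^sub>0 \<le> 1\<close> and \<open>v\<^sub>0 \<le> min 2 \<lambda>\<close>, induction over the layers bounds every feasible point of the
sublevel set by the point obtained from the recursion \<open>G\<^sub>i\<close>, which sets \<open>z\<^sub>i, z'\<^sub>i, h\<^sub>i\<close> equal to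
these right-hand sides. That point is itself feasible, because \<open>1 + min a b\<close> lies below
both \<open>1 + a\<close> and \<open>1 + b\<close>.\<close>

lemma u_of_0 [simp]: "u_of lam 0 = 1"
  by (simp add: u_of_def)

lemma v_of_0 [simp]: "v_of lam 0 = min 2 lam"
  by (simp add: v_of_def)

lemma u_of_Suc [simp]: "u_of lam (Suc i) = 1 + min (u_of lam i) (v_of lam i)"
  by (simp add: u_of_def v_of_def G_def split: prod.splits)

lemma v_of_Suc [simp]:
  "v_of lam (Suc i) = 1 - 1 / 2 ^ Suc i + max (u_of lam i) (v_of lam i)"
  by (simp add: u_of_def v_of_def G_def split: prod.splits)

lemma ereal_add_left_le:
  assumes "x \<le> ereal a"
  shows "ereal c + x \<le> ereal (c + a)"
  using add_left_mono[OF assms, of "ereal c"] by simp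

lemma TropLP_feasible_0:
  assumes "TropLP_feasible r (u, v, z, z', h)"
  shows "max (u 0) (z 0) = 1" and "max (v 0) (h 0) = 2"
  using assms unfolding TropLP_feasible_def by auto

lemma TropLP_feasible_Suc:
  assumes "TropLP_feasible r (u, v, z, z', h)" and "Suc i \<le> r"
  shows "max (u (Suc i)) (z (Suc i)) = 1 + u i"
    and "max (u (Suc i)) (z' (Suc i)) = 1 + v i"
    and "max (v (Suc i)) (h (Suc i)) = ereal (1 - 1 / 2 ^ Suc i) + max (u i) (v i)"
  using assms unfolding TropLP_feasible_def by (auto dest!: bspec[of _ _ "Suc i"])

lemma TropLP_sublevel_le_uv:
  assumes "(u, v, z, z', h) \<in> TropLP_sublevel r lam" and "i \<le> r"
  shows "u i \<le> ereal (u_of lam i) \<and> v i \<le> ereal (v_of lam i)"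
  using \<open>i \<le> r\<close>
proof (induction i)
  case 0
  have F: "TropLP_feasible r (u, v, z, z', h)" and "v 0 \<le> ereal lam"
    using assms(1) by (auto simp: TropLP_sublevel_def)
  moreover have "u 0 \<le> 1" "v 0 \<le> 2"
    using TropLP_feasible_0[OF F] by (metis max.cobounded1)+
  ultimately show ?case
    by (simp add: one_ereal_def)
next
  case (Suc i)
  have F: "TropLP_feasible r (u, v, z, z', h)"
    using assms(1) by (simp add: TropLP_sublevel_def)
  have u: "u i \<le> ereal (u_of lam i)" and v: "v i \<le> ereal (v_of lam i)"
    using Suc by auto
  note eqs = TropLP_feasible_Suc[OF F Suc.prems]
  have "u (Suc i) \<le> 1 + u i" and "u (Suc i) \<le> 1 + v i"
    using eqs(1,2) by (metis max.cobounded1)+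
  then have "u (Suc i) \<le> ereal (1 + u_of lam i)" and "u (Suc i) \<le> ereal (1 + v_of lam i)"
    using ereal_add_left_le[OF u, of 1] ereal_add_left_le[OF v, of 1]
    by (auto simp: one_ereal_def)
  moreover have "v (Suc i) \<le> ereal (1 - 1 / 2 ^ Suc i + max (u_of lam i) (v_of lam i))"
    using eqs(3) ereal_add_left_le[OF max.mono[OF u v, unfolded ereal_max[symmetric]]]
    by (metis max.cobounded1 order_trans)
  ultimately show ?case
    by (simp add: min_def)
qed

definition trop_candidate :: "real \<Rightarrow> trop_point" where
  "trop_candidate lam =
     (\<lambda>i. ereal (u_of lam i), \<lambda>i. ereal (v_of lam i), \<lambda>i. ereal (z_of lam i),
      \<lambda>i. ereal (z'_of lam i), \<lambda>i. ereal (h_of lam i))"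

lemma trop_candidate_in_sublevel: "trop_candidate lam \<in> TropLP_sublevel r lam"
proof -
  have "max (u_of lam (Suc i)) (z_of lam (Suc i)) = 1 + u_of lam i"
    and "max (u_of lam (Suc i)) (z'_of lam (Suc i)) = 1 + v_of lam i"
    and "max (v_of lam (Suc i)) (h_of lam (Suc i)) =
           1 - 1 / 2 ^ Suc i + max (u_of lam i) (v_of lam i)" for i
    by (simp_all add: z_of_def z'_of_def h_of_def max_def min_def)
  then have "max (ereal (u_of lam i)) (ereal (z_of lam i)) = 1 + ereal (u_of lam (i - 1))"
    and "max (ereal (u_of lam i)) (ereal (z'_of lam i)) = 1 + ereal (v_of lam (i - 1))"
    and "max (ereal (v_of lam i)) (ereal (h_of lam i)) =
           ereal (1 - 1 / 2 ^ i) + max (ereal (u_of lam (i - 1))) (ereal (v_of lam (i - 1)))"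
    if "i \<ge> 1" for i
    using that by (metis Suc_diff_1 ereal_max less_le_trans one_ereal_def plus_ereal.simps(1)
        zero_less_one)+
  then show ?thesis
    by (simp add: trop_candidate_def TropLP_sublevel_def TropLP_feasible_def z_of_def h_of_def)
qed

lemma TropLP_sublevel_le_candidate:
  assumes q: "q \<in> TropLP_sublevel r lam"
  shows "trop_le r q (trop_candidate lam)"
proof -
  obtain u v z z' h where q_def: "q = (u, v, z, z', h)"
    by (cases q) auto
  have F: "TropLP_feasible r (u, v, z, z', h)"
    using q by (simp add: q_def TropLP_sublevel_def)
  note uv = TropLP_sublevel_le_uv[OF q[unfolded q_def]]
  have step: "z (Suc i) \<le> ereal (z_of lam (Suc i)) \<and> z' (Suc i) \<le> ereal (z'_of lam (Suc i))
      \<and> h (Suc i) \<le> ereal (h_of lam (Suc i))" if "Suc i \<le> r" for i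
  proof -
    note eqs = TropLP_feasible_Suc[OF F that]
    have u: "u i \<le> ereal (u_of lam i)" and v: "v i \<le> ereal (v_of lam i)"
      using uv[of i] that by auto
    have "z (Suc i) \<le> 1 + u i" "z' (Suc i) \<le> 1 + v i"
      using eqs(1,2) by (metis max.cobounded2)+
    then have "z (Suc i) \<le> ereal (1 + u_of lam i)" "z' (Suc i) \<le> ereal (1 + v_of lam i)"
      using ereal_add_left_le[OF u, of 1] ereal_add_left_le[OF v, of 1]
      by (auto simp: one_ereal_def)
    moreover have "h (Suc i) \<le> ereal (1 - 1 / 2 ^ Suc i + max (u_of lam i) (v_of lam i))"
      using eqs(3) ereal_add_left_le[OF max.mono[OF u v, unfolded ereal_max[symmetric]]]
      by (metis max.cobounded2 order_trans)
    ultimately show ?thesis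
      by (simp add: z_of_def z'_of_def h_of_def)
  qed
  have "z 0 \<le> 1" "h 0 \<le> 2"
    using TropLP_feasible_0[OF F] by (metis max.cobounded2)+
  then have "z i \<le> ereal (z_of lam i) \<and> h i \<le> ereal (h_of lam i)" if "i \<le> r" for i
    using step that by (cases i) (auto simp: z_of_def h_of_def one_ereal_def)
  moreover have "z' i \<le> ereal (z'_of lam i)" if "i \<in> {1..r}" for i
    using step[of "i - 1"] that by simp
  ultimately show ?thesis
    using uv by (simp add: q_def trop_candidate_def trop_le_def)
qed

theorem mainTheorem12:
  fixes r :: nat and lam :: real
  assumes "r \<ge> 1"
  shows "is_trop_barycenter r (TropLP_sublevel r lam)
           (\<lambda>i. ereal (u_of lam i), \<lambda>i. ereal (v_of lam i), \<lambda>i. ereal (z_of lam i),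
            \<lambda>i. ereal (z'_of lam i), \<lambda>i. ereal (h_of lam i))"
  using trop_candidate_in_sublevel TropLP_sublevel_le_candidate
  unfolding is_trop_barycenter_def trop_candidate_def by blast

end
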